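(* Let $\Delta x>0$ and define $g_\tau(x)=\dfrac{\tfrac12 x}{\sinh(\tfrac12 x)}$ for $x\neq0$, $g_\tau(0)=1$. Then the function $h(x)=g_\tau(\Delta x)\,e^x$ is the reconstruction pair of $\exp$, i.e. $e^x=\frac{1}{\Delta x}\int_{x-\frac12\Delta x}^{x+\frac12\Delta x}h(\zeta)\,d\zeta$ for all real $x$. Moreover $g_\tau$ is the generating function of the numbers $\tau_n$: setting $\tau_n:=\frac{1}{n!}g_\tau^{(n)}(0)$ for all $n\in\mathbb{N}_0$, one has $\tau_{2n+1}=0$ for all $n\in\mathbb{N}_0$, $\tau_0=1$, and $\tau_{2k}=\sum_{s=0}^{k-1}\frac{-\tau_{2s}}{2^{2k-2s}(2k-2s+1)!}$ for all $k>0$. *)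

theory Defs
  imports "HOL-Analysis.Analysis"
begin

definition g_tau :: "real \<Rightarrow> real" where
  "g_tau x = (if x = 0 then 1 else (x / 2) / sinh (x / 2))"

definition tau :: "nat \<Rightarrow> real" where
  "tau n = (deriv ^^ n) g_tau 0 / fact n"

end

theory Submission
  imports Defs
begin

text \<open>
  Integrating \<open>exp\<close> over an interval of length \<open>\<Delta>x\<close> centred at \<open>x\<close> gives
  \<open>2 sinh(\<Delta>x/2) exp x\<close>, which is exactly what the factor \<open>g_tau \<Delta>x\<close> compensates.
  Near 0, \<open>g_tau\<close> is the reciprocal of the even power series
  \<open>sinh(x/2)/(x/2) = \<Sum>k. x^(2k) / (2^(2k) (2k+1)!)\<close>, so the \<open>tau n\<close> are the
  coefficients of the inverse of that series: they vanish at odd indices (an inverse of an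
  even series is even), and the recursion is the vanishing of the higher coefficients of
  the product of the two series.
\<close>

lemma fps_nth_has_fps_expansion:
  fixes f :: "'a :: {banach, real_normed_field} \<Rightarrow> 'a"
  assumes "f has_fps_expansion F"
  shows "fps_nth F n = (deriv ^^ n) f 0 / fact n"
proof -
  have "(deriv ^^ n) f has_fps_expansion (fps_deriv ^^ n) F"
    using assms by (induction n) (auto intro: has_fps_expansion_deriv)
  hence "eventually (\<lambda>z. eval_fps ((fps_deriv ^^ n) F) z = (deriv ^^ n) f z) (nhds 0)"
    by (auto simp: has_fps_expansion_def)
  hence "eval_fps ((fps_deriv ^^ n) F) 0 = (deriv ^^ n) f 0"
    by (rule eventually_nhds_x_imp_x)
  hence "(deriv ^^ n) f 0 = fact n * fps_nth F n"
    by (simp add: eval_fps_at_0 fps_0th_higher_deriv)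
  thus ?thesis
    by simp
qed

lemma fps_inverse_nth_rec:
  fixes F :: "'a :: field fps"
  assumes "fps_nth F 0 = 1" and "n > 0"
  shows "fps_nth (inverse F) n = - (\<Sum>i<n. fps_nth (inverse F) i * fps_nth F (n - i))"
proof -
  have "inverse F * F = 1"
    using assms(1) by (simp add: inverse_mult_eq_1)
  hence "(\<Sum>i=0..n. fps_nth (inverse F) i * fps_nth F (n - i)) = 0"
    using assms(2) by (metis fps_mult_nth fps_one_nth not_gr0)
  moreover have "{0..n} = insert n {..<n}"
    by auto
  ultimately show ?thesis
    using assms(1) by (simp add: eq_neg_iff_add_eq_0)
qed

lemma fps_inverse_odd_nth_eq_0:
  fixes F :: "'a :: field fps"
  assumes "fps_nth F 0 = 1" and F_odd: "\<And>m. odd m \<Longrightarrow> fps_nth F m = 0" and "odd n"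
  shows "fps_nth (inverse F) n = 0"
  using \<open>odd n\<close>
proof (induction n rule: less_induct)
  case (less n)
  have "(\<Sum>i<n. fps_nth (inverse F) i * fps_nth F (n - i)) = 0"
  proof (rule sum.neutral, safe)
    fix i
    assume "i < n"
    then show "fps_nth (inverse F) i * fps_nth F (n - i) = 0"
      using less F_odd[of "n - i"] by (cases "even i") auto
  qed
  moreover have "n > 0"
    using \<open>odd n\<close> by (cases n) auto
  ultimately show ?case
    using fps_inverse_nth_rec[OF assms(1)] by simp
qed

definition sinh_quot_fps :: "real fps" where
  "sinh_quot_fps = Abs_fps (\<lambda>n. if even n then 1 / (2 ^ n * fact (n + 1)) else 0)"

lemma has_fps_expansion_sinh_half:
  "(\<lambda>x::real. sinh (x / 2)) has_fps_expansion fps_const (1/2) * (fps_exp (1/2) - fps_exp (-1/2))"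
proof -
  have "(\<lambda>x::real. 1/2 * (exp (1/2 * x) - exp (-1/2 * x)))
          has_fps_expansion fps_const (1/2) * (fps_exp (1/2) - fps_exp (-1/2))"
    by (intro fps_expansion_intros)
  moreover have "(\<lambda>x::real. 1/2 * (exp (1/2 * x) - exp (-1/2 * x))) = (\<lambda>x. sinh (x / 2))"
    by (auto simp: sinh_def field_simps)
  ultimately show ?thesis
    by simp
qed

lemma has_fps_expansion_sinh_quot:
  "(\<lambda>x::real. if x = 0 then 1 else sinh (x / 2) / (x / 2)) has_fps_expansion sinh_quot_fps"
proof -
  define S :: "real fps" where "S = fps_const (1/2) * (fps_exp (1/2) - fps_exp (-1/2))"
  have S_nth: "fps_nth S n = ((1/2) ^ n - (-1/2) ^ n) / fact n / 2" for n
    by (simp add: S_def diff_divide_distrib)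
  have "1 \<le> subdegree S"
    by (rule subdegree_geI) (auto simp: fps_eq_iff S_nth intro!: exI[of _ 1])
  moreover have "fps_nth S 1 = 1/2"
    by (simp add: S_nth)
  ultimately have "(\<lambda>x::real. if x = 0 then 1/2 else sinh (x / 2) / x ^ 1)
           has_fps_expansion fps_shift 1 S"
    using has_fps_expansion_sinh_half unfolding S_def by (intro has_fps_expansion_shift) auto
  hence "(\<lambda>x::real. 2 * (if x = 0 then 1/2 else sinh (x / 2) / x ^ 1))
           has_fps_expansion fps_const 2 * fps_shift 1 S"
    by (rule has_fps_expansion_cmult_left)
  moreover have "(\<lambda>x::real. 2 * (if x = 0 then 1/2 else sinh (x / 2) / x ^ 1))
      = (\<lambda>x. if x = 0 then 1 else sinh (x / 2) / (x / 2))"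
    by auto
  moreover have "fps_const 2 * fps_shift 1 S = sinh_quot_fps"
  proof (rule fps_ext)
    fix n
    have "fps_nth (fps_const 2 * fps_shift 1 S) n = ((1/2) ^ Suc n - (-1/2) ^ Suc n) / fact (Suc n)"
      by (simp add: S_nth del: power_Suc fact_Suc) (simp add: field_simps del: power_Suc fact_Suc)
    also have "\<dots> = fps_nth sinh_quot_fps n"
      by (cases "even n") (simp_all add: sinh_quot_fps_def power_minus' field_simps)
    finally show "fps_nth (fps_const 2 * fps_shift 1 S) n = fps_nth sinh_quot_fps n" .
  qed
  ultimately show ?thesis
    by simp
qed

lemma g_tau_has_fps_expansion: "g_tau has_fps_expansion inverse sinh_quot_fps"
proof -
  have g_tau_eq: "g_tau = (\<lambda>x. inverse (if x = 0 then 1 else sinh (x / 2) / (x / 2)))"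
    by (auto simp: g_tau_def fun_eq_iff)
  show ?thesis
    unfolding g_tau_eq
    by (intro has_fps_expansion_inverse has_fps_expansion_sinh_quot)
       (simp add: sinh_quot_fps_def)
qed

lemma tau_eq_inverse_sinh_quot_fps: "tau n = fps_nth (inverse sinh_quot_fps) n"
  using fps_nth_has_fps_expansion[OF g_tau_has_fps_expansion] by (simp add: tau_def)

lemma integral_exp_centered:
  fixes dx x :: real
  assumes "dx \<ge> 0"
  shows "integral {x - dx/2 .. x + dx/2} exp = 2 * sinh (dx/2) * exp x"
proof -
  have "integral {x - dx/2 .. x + dx/2} exp = exp (x + dx/2) - exp (x - dx/2)"
    using assms integral_exp[of "x - dx/2" "x + dx/2"] by simp
  also have "\<dots> = exp x * exp (dx/2) - exp x * exp (- (dx/2))"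
    by (simp flip: exp_add)
  also have "\<dots> = 2 * sinh (dx/2) * exp x"
    by (simp add: sinh_def algebra_simps)
  finally show ?thesis .
qed

theorem theorem1:
  fixes dx :: real
  assumes "dx > 0"
  shows "(\<forall>x::real. exp x = (1 / dx) * integral {x - dx / 2 .. x + dx / 2} (\<lambda>\<zeta>. g_tau dx * exp \<zeta>))
    \<and> (\<forall>n. tau (2 * n + 1) = 0)
    \<and> tau 0 = 1
    \<and> (\<forall>k>0. tau (2 * k) =
          (\<Sum>s<k. - tau (2 * s) / (2 ^ (2 * k - 2 * s) * fact (2 * k - 2 * s + 1))))"
proof (intro conjI allI impI)
  fix x :: real
  show "exp x = (1 / dx) * integral {x - dx / 2 .. x + dx / 2} (\<lambda>\<zeta>. g_tau dx * exp \<zeta>)"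
    using assms integral_exp_centered[of dx x] by (simp add: g_tau_def field_simps)
next
  fix n
  show "tau (2 * n + 1) = 0"
    unfolding tau_eq_inverse_sinh_quot_fps
    by (rule fps_inverse_odd_nth_eq_0) (auto simp: sinh_quot_fps_def)
next
  show "tau 0 = 1"
    by (simp add: tau_eq_inverse_sinh_quot_fps sinh_quot_fps_def)
next
  fix k :: nat
  assume "k > 0"
  have "tau (2 * k) = - (\<Sum>i<2 * k. tau i * fps_nth sinh_quot_fps (2 * k - i))"
    unfolding tau_eq_inverse_sinh_quot_fps
    using \<open>k > 0\<close> by (intro fps_inverse_nth_rec) (auto simp: sinh_quot_fps_def)
  also have "(\<Sum>i<2 * k. tau i * fps_nth sinh_quot_fps (2 * k - i))
      = (\<Sum>i<2 * k. if even i then tau i * fps_nth sinh_quot_fps (2 * k - i) else 0)"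
    by (rule sum.cong) (auto simp: sinh_quot_fps_def)
  also have "\<dots> = (\<Sum>s<k. tau (2 * s) / (2 ^ (2 * k - 2 * s) * fact (2 * k - 2 * s + 1)))"
    by (simp add: sum_split_even_odd sinh_quot_fps_def)
  finally show "tau (2 * k) =
      (\<Sum>s<k. - tau (2 * s) / (2 ^ (2 * k - 2 * s) * fact (2 * k - 2 * s + 1)))"
    by (simp add: sum_negf)
qed

end
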